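(* Let $H=(U,(A_1,\dots,A_m))$ be a harmonic set system with $|U|<m(m-2)$ and $m\ge 51$. Then one can partition $U=U^{(1)}\sqcup U^{(2)}$ such that the induced set systems $H^{(i)}=(U^{(i)},(A_1\cap U^{(i)},\dots,A_m\cap U^{(i)}))$, $i=1,2$, are harmonic and satisfy $H^{(1)}_I=H^{(2)}_{\emptyset,I}=\emptyset$ for every nonconsecutive $I\subseteq[m]$ of size $3$.
   Context: For a set system $G=(V,(B_1,\dots,B_m))$ and $I_1,I_2\subseteq[m]$, $G_{I_1,I_2}=\bigcap_{i\in I_1}B_i\cap\bigcap_{i\in I_2}(V\setminus B_i)$ (empty intersection $=V$), $G_I=G_{I,\emptyset}$. The run decomposition of a finite set $I$ of positive integers is the partition of sizes, in nonincreasing order, of the maximal runs of consecutive integers in $I$. $G$ is harmonic if $|G_I|=|G_J|$ whenever $I,J\subseteq[m]$ have the same run decomposition. A set of integers is nonconsecutive if no two distinct elements differ by exactly $1$. *)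

theory Defs
  imports Main "HOL-Library.Multiset"
begin

text \<open>A set system G = (V, (B_1,...,B_m)) is represented by a ground set V,
  a family B :: nat => 'a set (only indices 1..m matter) and m.\<close>

definition gsect :: "'a set \<Rightarrow> (nat \<Rightarrow> 'a set) \<Rightarrow> nat set \<Rightarrow> nat set \<Rightarrow> 'a set" where
  "gsect V B I1 I2 = {x \<in> V. (\<forall>i\<in>I1. x \<in> B i) \<and> (\<forall>i\<in>I2. x \<notin> B i)}"

definition max_run :: "nat set \<Rightarrow> nat set \<Rightarrow> bool" where
  "max_run I R \<longleftrightarrow> (\<exists>a b. a \<le> b \<and> R = {a..b} \<and> R \<subseteq> I
      \<and> (a = 0 \<or> a - 1 \<notin> I) \<and> Suc b \<notin> I)"

text \<open>Run decomposition: the multiset of sizes of maximal runs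
  (equivalently, the partition listing these sizes in nonincreasing order).\<close>
definition run_decomp :: "nat set \<Rightarrow> nat multiset" where
  "run_decomp I = image_mset card (mset_set {R. max_run I R})"

definition harmonic :: "'a set \<Rightarrow> (nat \<Rightarrow> 'a set) \<Rightarrow> nat \<Rightarrow> bool" where
  "harmonic V B m \<longleftrightarrow> (\<forall>I J. I \<subseteq> {1..m} \<and> J \<subseteq> {1..m} \<and> run_decomp I = run_decomp J
      \<longrightarrow> card (gsect V B I {}) = card (gsect V B J {}))"

definition nonconsecutive :: "nat set \<Rightarrow> bool" where
  "nonconsecutive I \<longleftrightarrow> (\<forall>i\<in>I. \<forall>j\<in>I. i \<noteq> j \<longrightarrow> j \<noteq> i + 1)"

end

theory Submission
  imports Defs "HOL.Binomial_Plus"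
begin

(* Call (I, K) admissible if K is nonconsecutive and no index of K equals or is adjacent to an
   index of I.  Inclusion-exclusion over K shows that in a harmonic system |G_{I,K}| depends only
   on the run decomposition of I and on |K| for admissible pairs.

   Let S be the odd indices in [m], so |S| = w = (m+1) div 2 and C(w,3) >= m(m-2) > |U|.  If some
   point lay in G_{T1,T2} for apart nonconsecutive triples, the invariance would give a point y in
   G_{J1,J2} with J1, J2 triples inside S.  With X = {i in S. y in A_i} we have 3 <= |X| <= w - 3,
   and, again by invariance, G_{Y,S-Y} is nonempty for each of the C(w,|X|) >= C(w,3) sets Y of
   size |X| in S; these sets are disjoint, so |U| >= C(w,3), a contradiction.  Consequently no
   point separates two nonconsecutive triples, i.e. contains one and avoids the other: if it
   contained and missed three indices of S each, these would form such a pair; otherwise it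
   contains (or misses) all but two indices of S, and a triple apart from the given one can be
   chosen there.

   U1 is the set of points containing no nonconsecutive triple.  Adding to I or to K an index
   isolated from I and K splits G_{I,K} into two parts; iterating reaches either |K| = 3, where
   G_{I,K} lies inside U1, or |I| = 5, where G_I misses U1.  This shows that U1, and hence its
   complement, is harmonic. *)

section \<open>Separated index sets\<close>

definition apart :: "nat set \<Rightarrow> nat set \<Rightarrow> bool" where
  "apart I K \<longleftrightarrow> (\<forall>i\<in>I. \<forall>j\<in>K. i \<noteq> j \<and> j \<noteq> i + 1 \<and> i \<noteq> j + 1)"

definition nonconsecutive_triple :: "nat \<Rightarrow> nat set \<Rightarrow> bool" where
  "nonconsecutive_triple m T \<longleftrightarrow> T \<subseteq> {1..m} \<and> nonconsecutive T \<and> card T = 3"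

lemma apart_sym: "apart I K \<Longrightarrow> apart K I"
  unfolding apart_def by auto

lemma nonconsecutive_subset: "nonconsecutive K \<Longrightarrow> K' \<subseteq> K \<Longrightarrow> nonconsecutive K'"
  unfolding nonconsecutive_def by blast

lemma nonconsecutive_insert: "nonconsecutive K \<Longrightarrow> apart K {k} \<Longrightarrow> nonconsecutive (insert k K)"
  unfolding nonconsecutive_def apart_def by auto

lemma apart_if_nonconsecutive:
  assumes "nonconsecutive W" "I \<subseteq> W" "K \<subseteq> W" "I \<inter> K = {}"
  shows "apart I K"
  using assms unfolding nonconsecutive_def apart_def by (metis disjoint_iff subsetD)

lemma exists_apart_subset:
  assumes "finite X" "finite S" "3 * card X + n \<le> card S"
  obtains T where "T \<subseteq> S" "card T = n" "apart X T"
proof -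
  define N where "N = X \<union> Suc ` X \<union> (\<lambda>i. i - 1) ` X"
  have "card N \<le> card X + card (Suc ` X) + card ((\<lambda>i. i - 1) ` X)"
    unfolding N_def by (meson card_Un_le add_right_mono le_trans)
  also have "\<dots> \<le> 3 * card X"
    using card_image_le[OF assms(1), of Suc] card_image_le[OF assms(1), of "\<lambda>i. i - 1"] by simp
  finally have "n \<le> card (S - N)"
    using diff_card_le_card_Diff[of N S] assms N_def by simp
  then obtain T where T: "T \<subseteq> S - N" "card T = n"
    by (meson obtain_subset_with_card_n)
  have "apart X T"
    unfolding apart_def
  proof (intro ballI conjI)
    fix i j assume "i \<in> X" "j \<in> T"
    then have "i \<in> N" "Suc i \<in> N" "i - 1 \<in> N" "j \<notin> N"
      using T unfolding N_def by auto
    then show "i \<noteq> j" "j \<noteq> i + 1" "i \<noteq> j + 1" by auto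
  qed
  then show thesis using T that by blast
qed

lemma nonconsecutive_triple_subset:
  assumes "finite X" "5 \<le> card X"
  obtains T where "T \<subseteq> X" "nonconsecutive T" "card T = 3"
proof -
  define a where "a = Min X"
  define X1 where "X1 = X - {a, a + 1}"
  define b where "b = Min X1"
  define X2 where "X2 = X1 - {b, b + 1}"
  have "X \<noteq> {}" using assms by auto
  then have a: "a \<in> X" "\<And>y. y \<in> X \<Longrightarrow> a \<le> y" using assms(1) unfolding a_def by auto
  have "card X - 2 \<le> card X1"
    using diff_card_le_card_Diff[of "{a, a + 1}" X] card_insert_le[of "{a + 1}" a]
    unfolding X1_def by simp
  then have "3 \<le> card X1" using assms(2) by linarith
  have "finite X1" using assms(1) unfolding X1_def by simp
  moreover have "X1 \<noteq> {}" using \<open>3 \<le> card X1\<close> by auto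
  ultimately have b: "b \<in> X1" "\<And>y. y \<in> X1 \<Longrightarrow> b \<le> y" unfolding b_def by auto
  have "card X1 - 2 \<le> card X2"
    using diff_card_le_card_Diff[of "{b, b + 1}" X1] card_insert_le[of "{b + 1}" b]
    unfolding X2_def by simp
  then have "1 \<le> card X2" using \<open>3 \<le> card X1\<close> by linarith
  then obtain c where c: "c \<in> X2" by (metis card.empty ex_in_conv not_one_le_zero)
  have "a + 2 \<le> b" "b + 2 \<le> c"
    using a(2) b c unfolding X1_def X2_def by fastforce+
  moreover have "{a, b, c} \<subseteq> X" using a(1) b(1) c unfolding X1_def X2_def by auto
  ultimately show thesis
    using that[of "{a, b, c}"] unfolding nonconsecutive_def by auto
qed

section \<open>Run decompositions\<close>

lemma finite_max_runs: "finite I \<Longrightarrow> finite {R. max_run I R}"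
  by (rule finite_subset[of _ "Pow I"]) (auto simp: max_run_def)

lemma max_runs_insert_isolated:
  assumes "1 \<le> k" "apart I {k}"
  shows "{R. max_run (insert k I) R} = insert {k} {R. max_run I R}"
proof -
  have k: "k \<notin> I" "k + 1 \<notin> I" "k - 1 \<notin> I"
    using assms unfolding apart_def by (auto dest: bspec[of _ _ "k - 1"])
  show ?thesis
  proof (intro set_eqI iffI)
    fix R assume "R \<in> {R. max_run (insert k I) R}"
    then obtain a b where ab: "a \<le> b" "R = {a..b}" "R \<subseteq> insert k I"
        "a = 0 \<or> a - 1 \<notin> insert k I" "Suc b \<notin> insert k I"
      unfolding max_run_def by blast
    show "R \<in> insert {k} {R. max_run I R}"
    proof (cases "k \<in> R")
      case True
      have "a = k"
      proof (rule ccontr)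
        assume "a \<noteq> k"
        then have "k - 1 \<in> R" using True ab by auto
        then show False using ab k assms(1) by auto
      qed
      moreover have "b = k"
      proof (rule ccontr)
        assume "b \<noteq> k"
        then have "k + 1 \<in> R" using True ab by auto
        then show False using ab k by auto
      qed
      ultimately show ?thesis using ab by auto
    next
      case False
      then have "max_run I R" unfolding max_run_def using ab by blast
      then show ?thesis by auto
    qed
  next
    fix R assume "R \<in> insert {k} {R. max_run I R}"
    then consider "R = {k}" | "max_run I R" by auto
    then show "R \<in> {R. max_run (insert k I) R}"
    proof cases
      case 1
      then show ?thesis unfolding max_run_def using k by (intro CollectI exI[of _ k]) auto
    next
      case 2
      then obtain a b where ab: "a \<le> b" "R = {a..b}" "R \<subseteq> I"
          "a = 0 \<or> a - 1 \<notin> I" "Suc b \<notin> I"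
        unfolding max_run_def by blast
      have "a - 1 \<noteq> k \<or> a = 0" "Suc b \<noteq> k" using ab k by (cases a; auto)+
      then show ?thesis
        unfolding max_run_def using ab by (intro CollectI exI[of _ a] exI[of _ b]) auto
    qed
  qed
qed

lemma run_decomp_insert_isolated:
  assumes "finite I" "1 \<le> k" "apart I {k}"
  shows "run_decomp (insert k I) = add_mset 1 (run_decomp I)"
proof -
  have "{k} \<notin> {R. max_run I R}"
    using assms unfolding max_run_def apart_def by auto
  then show ?thesis
    unfolding run_decomp_def max_runs_insert_isolated[OF assms(2,3)]
    using finite_max_runs[OF assms(1)] by simp
qed

lemma run_decomp_nonconsecutive:
  assumes "finite T" "nonconsecutive T" "0 \<notin> T"
  shows "run_decomp T = replicate_mset (card T) 1"
  using assms
proof (induction T rule: finite_induct)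
  case empty
  have "{R. max_run {} R} = {}" unfolding max_run_def by auto
  then show ?case unfolding run_decomp_def by (simp only: mset_set.empty) simp
next
  case (insert k T)
  have "apart T {k}"
    using insert.prems insert.hyps(2) unfolding nonconsecutive_def apart_def by fastforce
  moreover have "1 \<le> k" using insert.prems by (cases k) auto
  moreover have "nonconsecutive T"
    using nonconsecutive_subset[OF insert.prems(1)] by blast
  ultimately show ?case
    using insert by (simp add: run_decomp_insert_isolated)
qed

lemma run_decomp_nonconsecutive_triple:
  assumes "nonconsecutive_triple m T"
  shows "run_decomp T = replicate_mset 3 1"
proof -
  have "finite T" "0 \<notin> T"
    using assms unfolding nonconsecutive_triple_def by (auto intro: finite_subset)
  then show ?thesis
    using run_decomp_nonconsecutive[OF \<open>finite T\<close> _ \<open>0 \<notin> T\<close>] assms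
    unfolding nonconsecutive_triple_def by simp
qed

lemma max_runs_disjoint:
  assumes "max_run I R1" "max_run I R2" "R1 \<inter> R2 \<noteq> {}"
  shows "R1 = R2"
proof -
  obtain a1 b1 where 1: "R1 = {a1..b1}" "R1 \<subseteq> I" "a1 = 0 \<or> a1 - 1 \<notin> I" "Suc b1 \<notin> I"
    using assms(1) unfolding max_run_def by blast
  obtain a2 b2 where 2: "R2 = {a2..b2}" "R2 \<subseteq> I" "a2 = 0 \<or> a2 - 1 \<notin> I" "Suc b2 \<notin> I"
    using assms(2) unfolding max_run_def by blast
  obtain c where c: "c \<in> R1" "c \<in> R2" using assms(3) by auto
  have "a1 = a2"
  proof (rule ccontr)
    assume "a1 \<noteq> a2"
    then have "a2 - 1 \<in> R1 \<and> 0 < a2 \<or> a1 - 1 \<in> R2 \<and> 0 < a1"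
      using c 1(1) 2(1) by auto
    then show False using 1 2 by auto
  qed
  moreover have "b1 = b2"
  proof (rule ccontr)
    assume "b1 \<noteq> b2"
    then have "Suc b1 \<in> R2 \<or> Suc b2 \<in> R1"
      using c 1(1) 2(1) by auto
    then show False using 1 2 by auto
  qed
  ultimately show ?thesis using 1 2 by simp
qed

lemma exists_max_run:
  assumes "finite I" "i \<in> I"
  obtains R where "max_run I R" "i \<in> R"
proof -
  define a where "a = (LEAST a. {a..i} \<subseteq> I)"
  define b where "b = (GREATEST b. {i..b} \<subseteq> I)"
  have a: "{a..i} \<subseteq> I" "\<And>a'. {a'..i} \<subseteq> I \<Longrightarrow> a \<le> a'"
    unfolding a_def by (rule LeastI[of _ i], use assms(2) in simp) (rule Least_le)
  have bounded: "y \<le> Max I" if "{i..y} \<subseteq> I" for y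
  proof (cases "i \<le> y")
    case True
    then show ?thesis using that Max_ge[OF assms(1)] by auto
  next
    case False
    then show ?thesis using Max_ge[OF assms] by linarith
  qed
  have i: "{i..i} \<subseteq> I" using assms(2) by simp
  have b: "{i..b} \<subseteq> I" "\<And>b'. {i..b'} \<subseteq> I \<Longrightarrow> b' \<le> b"
    unfolding b_def using GreatestI_nat[where P = "\<lambda>b. {i..b} \<subseteq> I", OF i bounded]
      Greatest_le_nat[where P = "\<lambda>b. {i..b} \<subseteq> I", OF _ bounded] by blast+
  have "a \<le> i" "i \<le> b" using a(2)[of i] b(2)[of i] assms(2) by auto
  have "{a..b} \<subseteq> I"
  proof
    fix x assume "x \<in> {a..b}"
    then show "x \<in> I" using a(1) b(1) by (cases "x \<le> i") auto
  qed
  moreover have "a = 0 \<or> a - 1 \<notin> I"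
  proof (rule ccontr)
    assume "\<not> (a = 0 \<or> a - 1 \<notin> I)"
    then have "0 < a" "a - 1 \<in> I" by auto
    have "{a - 1..i} \<subseteq> I"
    proof
      fix j assume "j \<in> {a - 1..i}"
      then have "j = a - 1 \<or> j \<in> {a..i}" by auto
      then show "j \<in> I" using a(1) \<open>a - 1 \<in> I\<close> by blast
    qed
    then show False using a(2) \<open>0 < a\<close> by fastforce
  qed
  moreover have "Suc b \<notin> I"
  proof
    assume "Suc b \<in> I"
    then have "{i..Suc b} \<subseteq> I" using b(1) by (auto simp: le_Suc_eq)
    then show False using b(2) by fastforce
  qed
  ultimately have "max_run I {a..b}"
    unfolding max_run_def using \<open>a \<le> i\<close> \<open>i \<le> b\<close> by auto
  then show thesis using that \<open>a \<le> i\<close> \<open>i \<le> b\<close> by auto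
qed

lemma sum_mset_run_decomp:
  assumes "finite I"
  shows "sum_mset (run_decomp I) = card I"
proof -
  let ?R = "{R. max_run I R}"
  have "I = \<Union>?R"
  proof
    show "I \<subseteq> \<Union>?R" using exists_max_run[OF assms] by (metis CollectI UnionI subsetI)
    show "\<Union>?R \<subseteq> I" unfolding max_run_def by blast
  qed
  moreover have "card (\<Union>?R) = sum card ?R"
  proof (rule card_Union_disjoint)
    show "pairwise disjnt ?R"
      using max_runs_disjoint unfolding pairwise_def disjnt_def by blast
    show "\<And>R. R \<in> ?R \<Longrightarrow> finite R"
      unfolding max_run_def by auto
  qed
  ultimately show ?thesis
    unfolding run_decomp_def by (simp add: sum_unfold_sum_mset)
qed

section \<open>Invariance of the counts in a harmonic system\<close>

lemma gsect_subset: "gsect V B I K \<subseteq> V"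
  unfolding gsect_def by auto

lemma finite_gsect: "finite V \<Longrightarrow> finite (gsect V B I K)"
  using finite_subset[OF gsect_subset] .

lemma gsect_restrict: "W \<subseteq> V \<Longrightarrow> gsect W (\<lambda>i. B i \<inter> W) I K = gsect V B I K \<inter> W"
  unfolding gsect_def by auto

lemma card_gsect_split:
  assumes "finite V"
  shows "card (gsect V B I K) = card (gsect V B I (insert k K)) + card (gsect V B (insert k I) K)"
proof -
  have "gsect V B I K = gsect V B I (insert k K) \<union> gsect V B (insert k I) K"
    "gsect V B I (insert k K) \<inter> gsect V B (insert k I) K = {}"
    unfolding gsect_def by auto
  then show ?thesis
    by (simp add: card_Un_disjoint finite_gsect[OF assms])
qed

definition admissible :: "nat \<Rightarrow> nat set \<Rightarrow> nat set \<Rightarrow> bool" where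
  "admissible m I K \<longleftrightarrow> I \<subseteq> {1..m} \<and> K \<subseteq> {1..m} \<and> nonconsecutive K \<and> apart I K"

lemma admissible_empty: "I \<subseteq> {1..m} \<Longrightarrow> admissible m I {}"
  unfolding admissible_def apart_def nonconsecutive_def by auto

lemma admissible_finite:
  assumes "admissible m I K"
  shows "finite I" "finite K"
  using assms unfolding admissible_def by (auto intro: finite_subset)

lemma admissible_remove:
  assumes "admissible m I (insert k K)" "k \<notin> K"
  shows "admissible m I K" "admissible m (insert k I) K"
  using assms unfolding admissible_def apart_def nonconsecutive_def by auto

lemma run_decomp_insert_admissible:
  assumes "admissible m I (insert k K)"
  shows "run_decomp (insert k I) = add_mset 1 (run_decomp I)"
proof (rule run_decomp_insert_isolated)
  show "finite I" using admissible_finite(1)[OF assms] .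
  show "1 \<le> k" "apart I {k}"
    using assms unfolding admissible_def apart_def by auto
qed

lemma obtain_isolated_index:
  assumes "admissible m I K" "3 * card (I \<union> K) < m"
  obtains k where "k \<notin> I" "k \<notin> K" "admissible m I (insert k K)" "admissible m (insert k I) K"
proof -
  have "finite (I \<union> K)" using admissible_finite[OF assms(1)] by simp
  then obtain T where T: "T \<subseteq> {1..m}" "card T = 1" "apart (I \<union> K) T"
    using exists_apart_subset[of "I \<union> K" "{1..m}" 1] assms(2) by auto
  then obtain k where "T = {k}" by (meson card_1_singletonE)
  then have k: "k \<in> {1..m}" "apart I {k}" "apart K {k}"
    using T unfolding apart_def by auto
  then have "k \<notin> I" "k \<notin> K"
    unfolding apart_def by auto
  moreover have "admissible m I (insert k K)"
    using assms(1) k nonconsecutive_insert unfolding admissible_def apart_def by auto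
  moreover have "admissible m (insert k I) K"
    using assms(1) k apart_sym[OF k(3)] unfolding admissible_def apart_def by auto
  ultimately show thesis using that by blast
qed

lemma harmonic_card_gsect_eq:
  assumes "finite V" "harmonic V B m"
    and "admissible m I K" "admissible m I' K'"
    and "run_decomp I = run_decomp I'" "card K = card K'"
  shows "card (gsect V B I K) = card (gsect V B I' K')"
  using assms(3-)
proof (induction "card K" arbitrary: I K I' K')
  case 0
  then have "K = {}" "K' = {}"
    using admissible_finite by auto
  then show ?case
    using assms(2) 0 unfolding harmonic_def admissible_def by auto
next
  case (Suc n)
  obtain k K0 where K: "K = insert k K0" "k \<notin> K0" "card K0 = n"
    using Suc.hyps(2) by (metis card_Suc_eq)
  obtain k' K0' where K': "K' = insert k' K0'" "k' \<notin> K0'" "card K0' = n"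
    using Suc.hyps(2) Suc.prems(4) by (metis card_Suc_eq)
  note adm = admissible_remove[OF Suc.prems(1)[unfolded K(1)] K(2)]
  note adm' = admissible_remove[OF Suc.prems(2)[unfolded K'(1)] K'(2)]
  have "run_decomp (insert k I) = run_decomp (insert k' I')"
    using run_decomp_insert_admissible Suc.prems K(1) K'(1) by metis
  then have "card (gsect V B (insert k I) K0) = card (gsect V B (insert k' I') K0')"
    using Suc.hyps(1) adm(2) adm'(2) K(3) K'(3) by simp
  moreover have "card (gsect V B I K0) = card (gsect V B I' K0')"
    using Suc.hyps(1) adm(1) adm'(1) Suc.prems(3) K(3) K'(3) by simp
  ultimately show ?case
    using card_gsect_split[OF assms(1), of B I K0 k] card_gsect_split[OF assms(1), of B I' K0' k']
      K(1) K'(1) by simp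
qed

section \<open>Points separating two nonconsecutive triples\<close>

lemma choose_le_card_if_gsect_nonempty:
  assumes "finite V" "harmonic V B m" "S \<subseteq> {1..m}" "nonconsecutive S" "X \<subseteq> S"
    and "gsect V B X (S - X) \<noteq> {}"
  shows "card S choose card X \<le> card V"
proof -
  have "finite S" using assms(3) by (rule finite_subset) simp
  have "0 \<notin> S" using assms(3) by auto
  have adm: "admissible m Z (S - Z)" if "Z \<subseteq> S" for Z
    using that assms(3) apart_if_nonconsecutive[OF assms(4)] nonconsecutive_subset[OF assms(4)]
    unfolding admissible_def by auto
  have rd: "run_decomp Z = replicate_mset (card Z) 1" if "Z \<subseteq> S" for Z
    using run_decomp_nonconsecutive[of Z] that nonconsecutive_subset[OF assms(4)]
      finite_subset[OF that \<open>finite S\<close>] \<open>0 \<notin> S\<close> by blast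
  define trace where "trace x = {i \<in> S. x \<in> B i}" for x
  have "{Y. Y \<subseteq> S \<and> card Y = card X} \<subseteq> trace ` V"
  proof
    fix Y assume "Y \<in> {Y. Y \<subseteq> S \<and> card Y = card X}"
    then have Y: "Y \<subseteq> S" "card Y = card X" by auto
    have "run_decomp Y = run_decomp X"
      using rd Y assms(5) by simp
    moreover have "card (S - Y) = card (S - X)"
      using Y assms(5) \<open>finite S\<close> by (simp add: card_Diff_subset finite_subset)
    ultimately have "card (gsect V B Y (S - Y)) = card (gsect V B X (S - X))"
      using harmonic_card_gsect_eq[OF assms(1,2) adm adm] Y(1) assms(5) by blast
    then obtain x where "x \<in> gsect V B Y (S - Y)"
      using assms(6) finite_gsect[OF assms(1)] by fastforce
    then have "Y = trace x" "x \<in> V"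
      using Y(1) unfolding trace_def gsect_def by auto
    then show "Y \<in> trace ` V" by blast
  qed
  then have "card {Y. Y \<subseteq> S \<and> card Y = card X} \<le> card (trace ` V)"
    by (rule card_mono[OF finite_imageI[OF assms(1)]])
  also have "\<dots> \<le> card V"
    by (rule card_image_le[OF assms(1)])
  finally show ?thesis
    using n_subsets[OF \<open>finite S\<close>] by simp
qed

lemma six_times_choose_three: "6 * (n choose 3) = n * (n - 1) * (n - 2)"
proof (induction n)
  case 0
  then show ?case by simp
next
  case (Suc n)
  have "Suc n choose 3 = (n choose 2) + (n choose 3)"
    by (simp add: numeral_3_eq_3 numeral_2_eq_2)
  moreover have "2 * (n choose 2) = n * (n - 1)"
    using choose_two[of n] by (cases n) auto
  ultimately have "6 * (Suc n choose 3) = 3 * (n * (n - 1)) + n * (n - 1) * (n - 2)"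
    using Suc by simp
  also have "\<dots> = Suc n * (Suc n - 1) * (Suc n - 2)"
    by (cases n; cases "n - 1"; simp add: algebra_simps)
  finally show ?case .
qed

lemma choose_three_le_choose:
  assumes "3 \<le> k" "k + 3 \<le> n"
  shows "n choose 3 \<le> n choose k"
proof (cases "2 * k \<le> n")
  case True
  then show ?thesis using binomial_mono[of 3 k n] assms by simp
next
  case False
  then have "n choose 3 \<le> n choose (n - k)"
    using binomial_mono[of 3 "n - k" n] assms by simp
  then show ?thesis
    using binomial_symmetric[of k n] assms by simp
qed

lemma gsect_apart_triples_empty:
  assumes "finite V" "harmonic V B m"
    and "S \<subseteq> {1..m}" "nonconsecutive S" "6 \<le> card S" "card V < card S choose 3"
    and "nonconsecutive_triple m T1" "nonconsecutive_triple m T2" "apart T1 T2"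
  shows "gsect V B T1 T2 = {}"
proof (rule ccontr)
  assume "gsect V B T1 T2 \<noteq> {}"
  have "finite S" using assms(3) by (rule finite_subset) simp
  obtain J where J: "J \<subseteq> S" "card J = 6"
    using obtain_subset_with_card_n[OF assms(5)] by metis
  obtain J1 where J1: "J1 \<subseteq> J" "card J1 = 3"
    using obtain_subset_with_card_n[of 3 J] J(2) by auto
  define J2 where "J2 = J - J1"
  have "card J2 = 3"
    unfolding J2_def using card_Diff_subset[OF finite_subset[OF J1(1)] J1(1)] J J1(2)
    by (simp add: finite_subset[OF _ \<open>finite S\<close>])
  have "J1 \<subseteq> S" "J2 \<subseteq> S" using J(1) J1(1) unfolding J2_def by auto
  then have triples: "nonconsecutive_triple m J1" "nonconsecutive_triple m J2"
    using J1(2) \<open>card J2 = 3\<close> assms(3) nonconsecutive_subset[OF assms(4)]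
    unfolding nonconsecutive_triple_def by auto
  have "admissible m J1 J2" "admissible m T1 T2"
    using triples assms(7-9) apart_if_nonconsecutive[OF assms(4), of J1 J2] J(1) J1(1)
    unfolding admissible_def nonconsecutive_triple_def J2_def by auto
  moreover have "run_decomp J1 = run_decomp T1"
    using run_decomp_nonconsecutive_triple triples(1) assms(7) by simp
  moreover have "card J2 = card T2"
    using triples(2) assms(8) unfolding nonconsecutive_triple_def by simp
  ultimately have "card (gsect V B J1 J2) = card (gsect V B T1 T2)"
    by (rule harmonic_card_gsect_eq[OF assms(1,2)])
  then obtain y where y: "y \<in> gsect V B J1 J2"
    using \<open>gsect V B T1 T2 \<noteq> {}\<close> finite_gsect[OF assms(1)] by fastforce
  define X where "X = {i \<in> S. y \<in> B i}"
  have "X \<subseteq> S" unfolding X_def by auto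
  have "J1 \<subseteq> X" "J2 \<subseteq> S - X"
    using y J J1 unfolding X_def J2_def gsect_def by auto
  then have "3 \<le> card X" "3 \<le> card (S - X)"
    using J1(2) \<open>card J2 = 3\<close> \<open>finite S\<close> \<open>X \<subseteq> S\<close>
    by (metis card_mono finite_Diff finite_subset)+
  moreover have "card (S - X) = card S - card X"
    using card_Diff_subset[OF finite_subset[OF \<open>X \<subseteq> S\<close> \<open>finite S\<close>] \<open>X \<subseteq> S\<close>] .
  ultimately have "card S choose 3 \<le> card S choose card X"
    by (intro choose_three_le_choose) linarith+
  moreover have "y \<in> gsect V B X (S - X)"
    using y unfolding X_def gsect_def by auto
  then have "card S choose card X \<le> card V"
    using choose_le_card_if_gsect_nonempty[OF assms(1-4) \<open>X \<subseteq> S\<close>] by blast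
  ultimately show False using assms(6) by linarith
qed

lemma no_separating_point:
  assumes "finite V" "harmonic V B m"
    and "S \<subseteq> {1..m}" "nonconsecutive S" "14 \<le> card S" "card V < card S choose 3"
    and "nonconsecutive_triple m T1" "nonconsecutive_triple m T2"
    and "x \<in> V" "\<forall>i\<in>T1. x \<in> B i" "\<forall>i\<in>T2. x \<notin> B i"
  shows False
proof -
  have empty: "x \<notin> gsect V B T T'"
    if "nonconsecutive_triple m T" "nonconsecutive_triple m T'" "apart T T'" for T T'
    using gsect_apart_triples_empty[OF assms(1-4) _ assms(6) that] assms(5) by auto
  have triple: "nonconsecutive_triple m T" if "T \<subseteq> S" "card T = 3" for T
    using that assms(3) nonconsecutive_subset[OF assms(4)] unfolding nonconsecutive_triple_def by auto
  have "finite S" using assms(3) by (rule finite_subset) simp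
  define P where "P = {i \<in> S. x \<in> B i}"
  define N where "N = {i \<in> S. x \<notin> B i}"
  have "P \<union> N = S" "P \<inter> N = {}" unfolding P_def N_def by auto
  then have card_PN: "card P + card N = card S"
    using \<open>finite S\<close> by (metis card_Un_disjoint finite_Un)
  have "finite T1" "card T1 = 3" "finite T2" "card T2 = 3"
    using assms(7,8) unfolding nonconsecutive_triple_def by (auto intro: finite_subset)
  consider "3 \<le> card P" "3 \<le> card N" | "card P \<le> 2" | "card N \<le> 2" by linarith
  then show False
  proof cases
    case 1
    obtain S1 where "S1 \<subseteq> P" "card S1 = 3" using obtain_subset_with_card_n[OF 1(1)] by metis
    moreover obtain S2 where "S2 \<subseteq> N" "card S2 = 3" using obtain_subset_with_card_n[OF 1(2)] by metis
    moreover have "P \<subseteq> S" "N \<subseteq> S" unfolding P_def N_def by auto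
    ultimately have "x \<in> gsect V B S1 S2" "apart S1 S2"
      "nonconsecutive_triple m S1" "nonconsecutive_triple m S2"
      using assms(9) \<open>P \<inter> N = {}\<close> apart_if_nonconsecutive[OF assms(4), of S1 S2] triple
      unfolding P_def N_def gsect_def by blast+
    then show False using empty by blast
  next
    case 2
    then obtain T where T: "T \<subseteq> N" "card T = 3" "apart T1 T"
      using exists_apart_subset[OF \<open>finite T1\<close>, of N 3] card_PN assms(5) \<open>card T1 = 3\<close>
        \<open>finite S\<close> unfolding N_def by auto
    then have "x \<in> gsect V B T1 T" "nonconsecutive_triple m T"
      using assms(9,10) triple unfolding N_def gsect_def by auto
    then show False using empty T(3) assms(7) by blast
  next
    case 3
    then obtain T where T: "T \<subseteq> P" "card T = 3" "apart T2 T"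
      using exists_apart_subset[OF \<open>finite T2\<close>, of P 3] card_PN assms(5) \<open>card T2 = 3\<close>
        \<open>finite S\<close> unfolding P_def by auto
    then have "x \<in> gsect V B T T2" "nonconsecutive_triple m T"
      using assms(9,11) triple unfolding P_def gsect_def by auto
    then show False using empty apart_sym[OF T(3)] assms(8) by blast
  qed
qed

section \<open>Splitting a harmonic system\<close>

lemma harmonic_restrict_if_triples_separated:
  assumes "finite V" "harmonic V B m" "19 \<le> m" "W \<subseteq> V"
    and avoiders: "\<And>T. nonconsecutive_triple m T \<Longrightarrow> gsect V B {} T \<subseteq> W"
    and containers: "\<And>T. nonconsecutive_triple m T \<Longrightarrow> gsect V B T {} \<inter> W = {}"
  shows "harmonic W (\<lambda>i. B i \<inter> W) m"
proof -
  let ?B = "\<lambda>i. B i \<inter> W"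
  have "finite W" using assms(1,4) finite_subset by blast
  have full: "gsect W ?B I K = gsect V B I K" if adm: "admissible m I K" and "3 \<le> card K" for I K
  proof -
    obtain T where "T \<subseteq> K" "card T = 3"
      using obtain_subset_with_card_n[OF \<open>3 \<le> card K\<close>] by metis
    then have "nonconsecutive_triple m T"
      using adm nonconsecutive_subset unfolding admissible_def nonconsecutive_triple_def by blast
    then have "gsect V B I K \<subseteq> W"
      using avoiders \<open>T \<subseteq> K\<close> unfolding gsect_def by blast
    then show ?thesis using gsect_restrict[OF assms(4)] by blast
  qed
  have none: "gsect W ?B I K = {}" if adm: "admissible m I K" and "5 \<le> card I" for I K
  proof -
    obtain T where "T \<subseteq> I" "nonconsecutive T" "card T = 3"
      using nonconsecutive_triple_subset[OF admissible_finite(1)[OF adm] \<open>5 \<le> card I\<close>] by metis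
    then have "nonconsecutive_triple m T"
      using adm unfolding admissible_def nonconsecutive_triple_def by blast
    then have "gsect V B I K \<inter> W = {}"
      using containers \<open>T \<subseteq> I\<close> unfolding gsect_def by blast
    then show ?thesis using gsect_restrict[OF assms(4)] by simp
  qed
  have invariant: "card (gsect W ?B I K) = card (gsect W ?B I' K')"
    if "admissible m I K" "admissible m I' K'" "run_decomp I = run_decomp I'" "card K = card K'"
    for I K I' K'
    using that
  proof (induction "(5 - card I) + (3 - card K)" arbitrary: I K I' K' rule: less_induct)
    case less
    have "card I = card I'"
      using sum_mset_run_decomp[OF admissible_finite(1)[OF less.prems(1)]]
        sum_mset_run_decomp[OF admissible_finite(1)[OF less.prems(2)]] less.prems(3) by simp
    consider "3 \<le> card K" | "5 \<le> card I" | "card K \<le> 2" "card I \<le> 4" by linarith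
    then show ?case
    proof cases
      case 1
      then have "3 \<le> card K'" using less.prems(4) by simp
      then show ?thesis
        using full[OF less.prems(1) 1] full[OF less.prems(2)]
          harmonic_card_gsect_eq[OF assms(1,2) less.prems] by simp
    next
      case 2
      then have "5 \<le> card I'" using \<open>card I = card I'\<close> by simp
      then show ?thesis using none[OF less.prems(1) 2] none[OF less.prems(2)] by simp
    next
      case 3
      have "3 * card (I \<union> K) < m" "3 * card (I' \<union> K') < m"
        using card_Un_le[of I K] card_Un_le[of I' K'] 3 less.prems(4) \<open>card I = card I'\<close> assms(3)
        by linarith+
      obtain k where
        k: "k \<notin> I" "k \<notin> K" "admissible m I (insert k K)" "admissible m (insert k I) K"
        using obtain_isolated_index[OF less.prems(1) \<open>3 * card (I \<union> K) < m\<close>] by blast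
      obtain k' where
        k': "k' \<notin> I'" "k' \<notin> K'" "admissible m I' (insert k' K')" "admissible m (insert k' I') K'"
        using obtain_isolated_index[OF less.prems(2) \<open>3 * card (I' \<union> K') < m\<close>] by blast
      have fin: "finite I" "finite K" "finite I'" "finite K'"
        using admissible_finite less.prems(1,2) by auto
      have "card (gsect W ?B I (insert k K)) = card (gsect W ?B I' (insert k' K'))"
        using less.hyps[OF _ k(3) k'(3)] less.prems(3,4) k(2) k'(2) fin 3 by simp
      moreover have "card (gsect W ?B (insert k I) K) = card (gsect W ?B (insert k' I') K')"
        using less.hyps[OF _ k(4) k'(4)] less.prems(3,4) k(1) k'(1) fin 3
          run_decomp_insert_admissible[OF k(3)] run_decomp_insert_admissible[OF k'(3)] by simp
      ultimately show ?thesis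
        using card_gsect_split[OF \<open>finite W\<close>, of ?B I K k]
          card_gsect_split[OF \<open>finite W\<close>, of ?B I' K' k'] by simp
    qed
  qed
  show ?thesis
    unfolding harmonic_def
  proof (intro allI impI)
    fix I J assume "I \<subseteq> {1..m} \<and> J \<subseteq> {1..m} \<and> run_decomp I = run_decomp J"
    then show "card (gsect W ?B I {}) = card (gsect W ?B J {})"
      using invariant[OF admissible_empty admissible_empty] by simp
  qed
qed

lemma harmonic_Diff:
  assumes "finite V" "harmonic V B m" "W \<subseteq> V" "harmonic W (\<lambda>i. B i \<inter> W) m"
  shows "harmonic (V - W) (\<lambda>i. B i \<inter> (V - W)) m"
proof -
  have card_diff: "card (gsect (V - W) (\<lambda>i. B i \<inter> (V - W)) I {})
      = card (gsect V B I {}) - card (gsect W (\<lambda>i. B i \<inter> W) I {})" for I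
  proof -
    have "gsect (V - W) (\<lambda>i. B i \<inter> (V - W)) I {} = gsect V B I {} - gsect W (\<lambda>i. B i \<inter> W) I {}"
      using assms(3) unfolding gsect_def by auto
    moreover have "gsect W (\<lambda>i. B i \<inter> W) I {} \<subseteq> gsect V B I {}"
      using gsect_restrict[OF assms(3)] by auto
    ultimately show ?thesis
      using card_Diff_subset finite_subset finite_gsect[OF assms(1)] by metis
  qed
  show ?thesis
    unfolding harmonic_def card_diff
  proof (intro allI impI)
    fix I J assume "I \<subseteq> {1..m} \<and> J \<subseteq> {1..m} \<and> run_decomp I = run_decomp J"
    then have "card (gsect V B I {}) = card (gsect V B J {})"
      "card (gsect W (\<lambda>i. B i \<inter> W) I {}) = card (gsect W (\<lambda>i. B i \<inter> W) J {})"
      using assms(2,4) unfolding harmonic_def by blast+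
    then show "card (gsect V B I {}) - card (gsect W (\<lambda>i. B i \<inter> W) I {})
        = card (gsect V B J {}) - card (gsect W (\<lambda>i. B i \<inter> W) J {})" by simp
  qed
qed

lemma obtain_large_nonconsecutive_subset:
  assumes "51 \<le> m"
  obtains S where "S \<subseteq> {1..m}" "nonconsecutive S" "26 \<le> card S" "m * (m - 2) \<le> card S choose 3"
proof -
  define w where "w = (m + 1) div 2"
  define S where "S = (\<lambda>j. 2 * j + 1) ` {..<w}"
  have "S \<subseteq> {1..m}" unfolding S_def w_def by auto
  moreover have "nonconsecutive S" unfolding S_def nonconsecutive_def by auto
  moreover have "card S = w" unfolding S_def by (simp add: card_image inj_on_def)
  moreover have "26 \<le> w" using assms unfolding w_def by simp
  moreover have "m * (m - 2) \<le> w choose 3"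
  proof -
    have "m * (m - 2) \<le> (2 * w) * (2 * (w - 1))"
      by (rule mult_le_mono) (simp_all add: w_def)
    then have "6 * (m * (m - 2)) \<le> 24 * (w * (w - 1))" by simp
    also have "\<dots> \<le> (w - 2) * (w * (w - 1))"
      using \<open>26 \<le> w\<close> by (intro mult_le_mono1) simp
    also have "\<dots> = 6 * (w choose 3)"
      using six_times_choose_three[of w] by (simp add: algebra_simps)
    finally show ?thesis by simp
  qed
  ultimately show thesis using that by simp
qed

lemma harmonic_split_if_no_separating_point:
  assumes "finite V" "harmonic V B m" "19 \<le> m"
    and no_separating_point: "\<And>x T1 T2. x \<in> V \<Longrightarrow> nonconsecutive_triple m T1 \<Longrightarrow>
      nonconsecutive_triple m T2 \<Longrightarrow> \<forall>i\<in>T1. x \<in> B i \<Longrightarrow> \<forall>i\<in>T2. x \<notin> B i \<Longrightarrow> False"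
  obtains W where "W \<subseteq> V" "harmonic W (\<lambda>i. B i \<inter> W) m" "harmonic (V - W) (\<lambda>i. B i \<inter> (V - W)) m"
    "\<And>T. nonconsecutive_triple m T \<Longrightarrow>
      gsect W (\<lambda>i. B i \<inter> W) T {} = {} \<and> gsect (V - W) (\<lambda>i. B i \<inter> (V - W)) {} T = {}"
proof -
  define W where "W = {x \<in> V. \<forall>T. nonconsecutive_triple m T \<longrightarrow> (\<exists>i\<in>T. x \<notin> B i)}"
  have "W \<subseteq> V" unfolding W_def by auto
  have avoiders: "gsect V B {} T \<subseteq> W" if "nonconsecutive_triple m T" for T
  proof
    fix x assume "x \<in> gsect V B {} T"
    then have "x \<in> V" "\<forall>i\<in>T. x \<notin> B i" unfolding gsect_def by auto
    then show "x \<in> W" using no_separating_point that unfolding W_def by blast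
  qed
  have containers: "gsect V B T {} \<inter> W = {}" if "nonconsecutive_triple m T" for T
    using that unfolding W_def gsect_def by blast
  have "harmonic W (\<lambda>i. B i \<inter> W) m"
    by (rule harmonic_restrict_if_triples_separated[OF assms(1-3) \<open>W \<subseteq> V\<close> avoiders containers])
  moreover have "harmonic (V - W) (\<lambda>i. B i \<inter> (V - W)) m"
    using harmonic_Diff[OF assms(1,2) \<open>W \<subseteq> V\<close> calculation] .
  moreover have "gsect W (\<lambda>i. B i \<inter> W) T {} = {} \<and> gsect (V - W) (\<lambda>i. B i \<inter> (V - W)) {} T = {}"
    if "nonconsecutive_triple m T" for T
    unfolding gsect_restrict[OF \<open>W \<subseteq> V\<close>] gsect_restrict[OF Diff_subset]
    using avoiders[OF that] containers[OF that] by blast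
  ultimately show thesis using that[OF \<open>W \<subseteq> V\<close>] by blast
qed

theorem lemma4p25:
  fixes U :: "'a set" and A :: "nat \<Rightarrow> 'a set" and m :: nat
  assumes "finite U"
    and "\<forall>i\<in>{1..m}. A i \<subseteq> U"
    and "harmonic U A m"
    and "card U < m * (m - 2)"
    and "m \<ge> 51"
  shows "\<exists>U1 U2. U1 \<union> U2 = U \<and> U1 \<inter> U2 = {}
    \<and> harmonic U1 (\<lambda>i. A i \<inter> U1) m \<and> harmonic U2 (\<lambda>i. A i \<inter> U2) m
    \<and> (\<forall>I. I \<subseteq> {1..m} \<and> nonconsecutive I \<and> card I = 3 \<longrightarrow>
          gsect U1 (\<lambda>i. A i \<inter> U1) I {} = {} \<and> gsect U2 (\<lambda>i. A i \<inter> U2) {} I = {})"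
proof -
  obtain S where S: "S \<subseteq> {1..m}" "nonconsecutive S" "26 \<le> card S" "m * (m - 2) \<le> card S choose 3"
    using obtain_large_nonconsecutive_subset assms(5) by blast
  have no_separating_point_in_U: False
    if "x \<in> U" "nonconsecutive_triple m T1" "nonconsecutive_triple m T2"
      "\<forall>i\<in>T1. x \<in> A i" "\<forall>i\<in>T2. x \<notin> A i" for x T1 T2
    using no_separating_point[OF assms(1,3) S(1,2) _ _ that(2,3,1,4,5)]
      S(3,4) assms(4) by linarith
  have "19 \<le> m" using assms(5) by simp
  obtain W where W: "W \<subseteq> U" "harmonic W (\<lambda>i. A i \<inter> W) m" "harmonic (U - W) (\<lambda>i. A i \<inter> (U - W)) m"
    "\<And>T. nonconsecutive_triple m T \<Longrightarrow>
      gsect W (\<lambda>i. A i \<inter> W) T {} = {} \<and> gsect (U - W) (\<lambda>i. A i \<inter> (U - W)) {} T = {}"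
    using harmonic_split_if_no_separating_point[OF assms(1,3) \<open>19 \<le> m\<close>] no_separating_point_in_U
    by blast
  have "W \<union> (U - W) = U" "W \<inter> (U - W) = {}" using W(1) by auto
  with W(2-4) show ?thesis
    unfolding nonconsecutive_triple_def by blast
qed

end
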